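(* Let $M$ be a model of the theory PrA of probability algebras. A nonempty closed set $D\subseteq M$ is definable with parameters from $M$ if and only if $D=[a,b]=\{x\in M: a\le x\le b\}$ for some $a,b\in M$ with $a\le b$.
   Context: PrA is the affine theory in the language $\{\wedge,\vee,{}',0,1,\mu\}$ (with metric $d$) axiomatized by: the axioms of Boolean algebras; $\mu(0)=0$, $\mu(1)=1$; $\mu(x)\le\mu(x\vee y)$; $\mu(x\wedge y)+\mu(x\vee y)=\mu(x)+\mu(y)$; $d(x,y)=\mu(x\triangle y)$. Models are complete metric spaces, so they are measure algebras of probability spaces (Dedekind complete Boolean algebras with a $\sigma$-additive strictly positive probability $\mu$), and $\le$ is the Boolean order. Affine formulas are built from $1$ and atomic formulas using only $r\cdot\phi$ ($r\in\mathbb R$), $\phi+\psi$, $\inf_x$, $\sup_x$. A predicate $P:M\to\mathbb R$ is definable with parameters if it is a uniform limit on $M$ of interpretations of affine formulas with parameters from $M$. A closed $D\subseteq M$ is definable with parameters if $x\mapsto d(x,D)=\inf_{a\in D}d(x,a)$ is definable with parameters. *)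

theory Defs
  imports "HOL-Analysis.Analysis"
begin

text \<open>A model of PrA is represented by a type of class boolean_algebra (the Boolean
algebra axioms, with 0 = bot, 1 = top, meet, join, complement) together with
a function mu satisfying the PrA axioms, such that the induced d is a metric
and the resulting metric space is complete.\<close>

definition sdiff :: "'a::boolean_algebra \<Rightarrow> 'a \<Rightarrow> 'a" where
  "sdiff x y = sup (inf x (- y)) (inf (- x) y)"

definition pra_dist :: "('a::boolean_algebra \<Rightarrow> real) \<Rightarrow> 'a \<Rightarrow> 'a \<Rightarrow> real" where
  "pra_dist \<mu> x y = \<mu> (sdiff x y)"

definition prA_model :: "('a::boolean_algebra \<Rightarrow> real) \<Rightarrow> bool" where
  "prA_model \<mu> \<longleftrightarrow>
     \<mu> bot = 0 \<and> \<mu> top = 1 \<and>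
     (\<forall>x y. \<mu> x \<le> \<mu> (sup x y)) \<and>
     (\<forall>x y. \<mu> (inf x y) + \<mu> (sup x y) = \<mu> x + \<mu> y) \<and>
     \<comment> \<open>d is a metric (not merely a pseudometric)\<close>
     (\<forall>x y. pra_dist \<mu> x y = 0 \<longrightarrow> x = y) \<and>
     \<comment> \<open>completeness of the metric d\<close>
     (\<forall>s :: nat \<Rightarrow> 'a.
        (\<forall>e>0. \<exists>N. \<forall>m\<ge>N. \<forall>n\<ge>N. pra_dist \<mu> (s m) (s n) < e) \<longrightarrow>
        (\<exists>l. (\<lambda>n. pra_dist \<mu> (s n) l) \<longlonglongrightarrow> 0))"

datatype 'a trm =
    TVar nat | TPar 'a | TMeet "'a trm" "'a trm" | TJoin "'a trm" "'a trm"
  | TCompl "'a trm" | TZero | TOne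

datatype 'a afml =
    AOne
  | AMu "'a trm"
  | ADist "'a trm" "'a trm"
  | AScale real "'a afml"
  | APlus "'a afml" "'a afml"
  | AInf nat "'a afml"
  | ASup nat "'a afml"

primrec tfv :: "'a trm \<Rightarrow> nat set" where
  "tfv (TVar n) = {n}"
| "tfv (TPar a) = {}"
| "tfv (TMeet s t) = tfv s \<union> tfv t"
| "tfv (TJoin s t) = tfv s \<union> tfv t"
| "tfv (TCompl t) = tfv t"
| "tfv TZero = {}"
| "tfv TOne = {}"

primrec ffv :: "'a afml \<Rightarrow> nat set" where
  "ffv AOne = {}"
| "ffv (AMu t) = tfv t"
| "ffv (ADist s t) = tfv s \<union> tfv t"
| "ffv (AScale r \<phi>) = ffv \<phi>"
| "ffv (APlus \<phi> \<psi>) = ffv \<phi> \<union> ffv \<psi>"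
| "ffv (AInf x \<phi>) = ffv \<phi> - {x}"
| "ffv (ASup x \<phi>) = ffv \<phi> - {x}"

primrec teval :: "(nat \<Rightarrow> 'a::boolean_algebra) \<Rightarrow> 'a trm \<Rightarrow> 'a" where
  "teval \<rho> (TVar n) = \<rho> n"
| "teval \<rho> (TPar a) = a"
| "teval \<rho> (TMeet s t) = inf (teval \<rho> s) (teval \<rho> t)"
| "teval \<rho> (TJoin s t) = sup (teval \<rho> s) (teval \<rho> t)"
| "teval \<rho> (TCompl t) = - teval \<rho> t"
| "teval \<rho> TZero = bot"
| "teval \<rho> TOne = top"

primrec feval :: "('a::boolean_algebra \<Rightarrow> real) \<Rightarrow> (nat \<Rightarrow> 'a) \<Rightarrow> 'a afml \<Rightarrow> real" where
  "feval \<mu> \<rho> AOne = 1"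
| "feval \<mu> \<rho> (AMu t) = \<mu> (teval \<rho> t)"
| "feval \<mu> \<rho> (ADist s t) = pra_dist \<mu> (teval \<rho> s) (teval \<rho> t)"
| "feval \<mu> \<rho> (AScale r \<phi>) = r * feval \<mu> \<rho> \<phi>"
| "feval \<mu> \<rho> (APlus \<phi> \<psi>) = feval \<mu> \<rho> \<phi> + feval \<mu> \<rho> \<psi>"
| "feval \<mu> \<rho> (AInf x \<phi>) = (INF a. feval \<mu> (\<rho>(x := a)) \<phi>)"
| "feval \<mu> \<rho> (ASup x \<phi>) = (SUP a. feval \<mu> (\<rho>(x := a)) \<phi>)"

text \<open>A predicate P on M is definable with parameters if it is a uniform limit on M
of interpretations of affine formulas phi(x) (free variables among {x}, x = variable 0)
with parameters from M. The valuation of variables other than 0 is irrelevant.\<close>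

definition definable_pred :: "('a::boolean_algebra \<Rightarrow> real) \<Rightarrow> ('a \<Rightarrow> real) \<Rightarrow> bool" where
  "definable_pred \<mu> P \<longleftrightarrow>
     (\<exists>\<phi>s :: nat \<Rightarrow> 'a afml.
        (\<forall>n. ffv (\<phi>s n) \<subseteq> {0}) \<and>
        uniform_limit UNIV (\<lambda>n a. feval \<mu> (\<lambda>_. a) (\<phi>s n)) P sequentially)"

definition dist_to_set :: "('a::boolean_algebra \<Rightarrow> real) \<Rightarrow> 'a set \<Rightarrow> 'a \<Rightarrow> real" where
  "dist_to_set \<mu> D x = (INF a\<in>D. pra_dist \<mu> x a)"

definition closed_set :: "('a::boolean_algebra \<Rightarrow> real) \<Rightarrow> 'a set \<Rightarrow> bool" where
  "closed_set \<mu> D \<longleftrightarrow> (\<forall>x. (\<forall>e>0. \<exists>a\<in>D. pra_dist \<mu> x a < e) \<longrightarrow> x \<in> D)"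

definition definable_set :: "('a::boolean_algebra \<Rightarrow> real) \<Rightarrow> 'a set \<Rightarrow> bool" where
  "definable_set \<mu> D \<longleftrightarrow> definable_pred \<mu> (dist_to_set \<mu> D)"

end

theory Submission
  imports Defs
begin

text \<open>
  For c \<in> M, an element is determined by its parts below c and below -c, so two valuations can be
  cut along c and re-glued crosswise. The measure is additive over this decomposition, hence the sum
  of the values of an atomic formula at the two re-glued valuations equals the sum at the original
  ones. This identity survives sums and scalings, and also the quantifiers, because re-gluing twice
  gives back the original pair. So it holds for every definable predicate, in particular for the
  distance to a definable set D; as that distance is non-negative and vanishes exactly on D, the set
  D is closed under re-gluing: under meets, joins and "convex combinations" (x is the gluing of b and
  a along x whenever a \<le> x \<le> b). Completeness supplies a least and a greatest element of such a
  set, which is therefore an interval. Conversely the distance to [a, b] is the affine formula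
  \<mu>(a - x) + \<mu>(x - b).
\<close>

definition mix :: "'a::boolean_algebra \<Rightarrow> 'a \<Rightarrow> 'a \<Rightarrow> 'a" where
  "mix c p q = sup (inf p c) (inf q (- c))"

lemma sup_inf_compl_split: "sup (inf x c) (inf x (- c)) = (x::'a::boolean_algebra)"
  by (metis boolean_algebra.conj_disj_distrib boolean_algebra.disj_cancel_right inf_top_right)

lemma boolean_algebra_eq_by_split:
  fixes x y :: "'a::boolean_algebra"
  assumes "inf x c = inf y c" and "inf x (- c) = inf y (- c)"
  shows "x = y"
  by (metis assms sup_inf_compl_split)

lemma inf_mix_left: "inf (mix c p q) c = inf p c"
  and inf_mix_right: "inf (mix c p q) (- c) = inf q (- c)"
  unfolding mix_def by (simp_all add: inf_sup_distrib2 inf_assoc)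

lemma compl_mix: "- mix c p q = mix c (- p) (- q)"
proof (rule boolean_algebra_eq_by_split[where c = c])
  have compl_inf: "inf (- x) d = inf (- inf x d) d" for x d :: 'a
    by (simp add: inf_sup_distrib2)
  show "inf (- mix c p q) c = inf (mix c (- p) (- q)) c"
    using compl_inf[of "mix c p q" c] compl_inf[of p c] by (simp only: inf_mix_left)
  show "inf (- mix c p q) (- c) = inf (mix c (- p) (- q)) (- c)"
    using compl_inf[of "mix c p q" "- c"] compl_inf[of q "- c"] by (simp only: inf_mix_right)
qed

lemma inf_mix: "inf (mix c p q) (mix c p' q') = mix c (inf p p') (inf q q')"
proof (rule boolean_algebra_eq_by_split[where c = c])
  have inf_inf: "inf (inf x y) d = inf (inf x d) (inf y d)" for x y d :: 'a
    by (simp add: inf_aci)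
  show "inf (inf (mix c p q) (mix c p' q')) c = inf (mix c (inf p p') (inf q q')) c"
    using inf_inf[of "mix c p q" "mix c p' q'" c] inf_inf[of p p' c] by (simp only: inf_mix_left)
  show "inf (inf (mix c p q) (mix c p' q')) (- c) = inf (mix c (inf p p') (inf q q')) (- c)"
    using inf_inf[of "mix c p q" "mix c p' q'" "- c"] inf_inf[of q q' "- c"]
    by (simp only: inf_mix_right)
qed

lemma sup_mix: "sup (mix c p q) (mix c p' q') = mix c (sup p p') (sup q q')"
proof -
  have "sup (mix c p q) (mix c p' q') = - inf (- mix c p q) (- mix c p' q')"
    by simp
  also have "\<dots> = mix c (sup p p') (sup q q')"
    by (simp only: compl_mix inf_mix) simp
  finally show ?thesis .
qed

lemma sdiff_mix: "sdiff (mix c p q) (mix c p' q') = mix c (sdiff p p') (sdiff q q')"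
  unfolding sdiff_def by (simp only: compl_mix inf_mix sup_mix)

lemma mix_same: "mix c p p = p"
  unfolding mix_def by (rule sup_inf_compl_split)

lemma mix_mix_swap: "mix c (mix c p q) (mix c q p) = p"
  by (rule boolean_algebra_eq_by_split[where c = c]) (simp_all only: inf_mix_left inf_mix_right)

lemma mix_self_left: "mix x x y = sup x y"
  unfolding mix_def by (simp add: sup_inf_distrib1)

lemma mix_self_right: "mix x y x = inf y x"
  unfolding mix_def by simp

lemma mix_between:
  assumes "a \<le> x" and "x \<le> b"
  shows "mix x b a = x"
proof -
  have "inf a (- x) = bot"
    using inf_mono[OF assms(1) order_refl, of "- x"] by (simp add: le_bot)
  moreover have "inf b x = x"
    using assms(2) by (simp add: inf_absorb2)
  ultimately show ?thesis
    unfolding mix_def by simp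
qed

lemma sdiff_compl: "sdiff (- x) (- y) = sdiff x y"
  unfolding sdiff_def by (simp add: sup_commute inf_commute)

context
  fixes \<mu> :: "'a::boolean_algebra \<Rightarrow> real"
  assumes M: "prA_model \<mu>"
begin

lemma mu_bot: "\<mu> bot = 0"
  and mu_sup_ge: "\<mu> x \<le> \<mu> (sup x y)"
  and mu_modular: "\<mu> (inf x y) + \<mu> (sup x y) = \<mu> x + \<mu> y"
  and pra_dist_eq_0D: "pra_dist \<mu> x y = 0 \<Longrightarrow> x = y"
  using M unfolding prA_model_def by auto

lemma pra_complete:
  assumes "\<forall>e>0. \<exists>N. \<forall>m\<ge>N. \<forall>n\<ge>N. pra_dist \<mu> (s m) (s n) < e"
  obtains l where "(\<lambda>n. pra_dist \<mu> (s n) l) \<longlonglongrightarrow> 0"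
proof -
  have "\<forall>s :: nat \<Rightarrow> 'a. (\<forall>e>0. \<exists>N. \<forall>m\<ge>N. \<forall>n\<ge>N. pra_dist \<mu> (s m) (s n) < e) \<longrightarrow>
      (\<exists>l. (\<lambda>n. pra_dist \<mu> (s n) l) \<longlonglongrightarrow> 0)"
    using M unfolding prA_model_def by blast
  then show ?thesis
    using assms that by blast
qed

lemma mu_mono: "x \<le> y \<Longrightarrow> \<mu> x \<le> \<mu> y"
  using mu_sup_ge[of x y] by (simp add: sup_absorb2)

lemma mu_nonneg: "0 \<le> \<mu> x"
  using mu_mono[of bot x] mu_bot by simp

lemma mu_le_1: "\<mu> x \<le> 1"
  using mu_mono[of x top] M unfolding prA_model_def by simp

lemma mu_split: "\<mu> x = \<mu> (inf x c) + \<mu> (inf x (- c))"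
proof -
  have "inf (inf x c) (inf x (- c)) = bot"
    using inf_mono[OF inf_le2 inf_le2, of x c x "- c"] by (simp add: le_bot)
  then show ?thesis
    using mu_modular[of "inf x c" "inf x (- c)"] mu_bot by (simp add: sup_inf_compl_split)
qed

lemma mu_mix: "\<mu> (mix c p q) + \<mu> (mix c q p) = \<mu> p + \<mu> q"
  using mu_split[of "mix c p q" c] mu_split[of "mix c q p" c] mu_split[of p c] mu_split[of q c]
  by (simp add: inf_mix_left inf_mix_right)

lemma pra_dist_nonneg: "0 \<le> pra_dist \<mu> x y"
  unfolding pra_dist_def by (rule mu_nonneg)

lemma pra_dist_commute: "pra_dist \<mu> x y = pra_dist \<mu> y x"
  unfolding pra_dist_def sdiff_def by (simp add: sup_commute inf_commute)

lemma pra_dist_self: "pra_dist \<mu> x x = 0"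
  unfolding pra_dist_def sdiff_def by (simp add: mu_bot)

lemma pra_dist_compl: "pra_dist \<mu> (- x) (- y) = pra_dist \<mu> x y"
  unfolding pra_dist_def by (simp add: sdiff_compl)

lemma pra_dist_le_eq: "y \<le> x \<Longrightarrow> pra_dist \<mu> x y = \<mu> x - \<mu> y"
proof -
  assume "y \<le> x"
  then have "inf (- x) y = bot"
    using inf_mono[OF order_refl \<open>y \<le> x\<close>, of "- x"] by (simp add: le_bot inf_commute)
  then have "sdiff x y = inf x (- y)"
    unfolding sdiff_def by simp
  moreover have "inf x y = y"
    using \<open>y \<le> x\<close> by (simp add: inf_absorb2)
  ultimately show ?thesis
    using mu_split[of x y] unfolding pra_dist_def by simp
qed

lemma abs_mu_diff_le_pra_dist: "\<bar>\<mu> x - \<mu> y\<bar> \<le> pra_dist \<mu> x y"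
proof -
  have le: "\<mu> x \<le> \<mu> y + pra_dist \<mu> x y" for x y
  proof -
    have "\<mu> (inf x (- y)) \<le> pra_dist \<mu> x y"
      unfolding pra_dist_def sdiff_def by (rule mu_mono) simp
    then show ?thesis
      using mu_split[of x y] mu_mono[of "inf x y" y] by simp
  qed
  show ?thesis
    using le[of x y] le[of y x] pra_dist_commute[of y x] unfolding abs_le_iff by linarith
qed

end

lemma abs_INF_le:
  fixes f :: "'b \<Rightarrow> real"
  assumes "\<And>a. \<bar>f a\<bar> \<le> B"
  shows "\<bar>INF a. f a\<bar> \<le> B"
proof -
  have bounds: "- B \<le> f a" "f a \<le> B" for a
    using assms[of a] by (simp_all add: abs_le_iff)
  then have "(INF a. f a) \<le> f undefined"
    by (intro cINF_lower bdd_belowI[where m = "- B"]) auto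
  moreover have "- B \<le> (INF a. f a)"
    using bounds by (intro cINF_greatest) auto
  ultimately show ?thesis
    using bounds[of undefined] by (simp add: abs_le_iff)
qed

lemma abs_SUP_le:
  fixes f :: "'b \<Rightarrow> real"
  assumes "\<And>a. \<bar>f a\<bar> \<le> B"
  shows "\<bar>SUP a. f a\<bar> \<le> B"
proof -
  have bounds: "- B \<le> f a" "f a \<le> B" for a
    using assms[of a] by (simp_all add: abs_le_iff)
  then have "f undefined \<le> (SUP a. f a)"
    by (intro cSUP_upper bdd_aboveI[where M = B]) auto
  moreover have "(SUP a. f a) \<le> B"
    using bounds by (intro cSUP_least) auto
  ultimately show ?thesis
    using bounds[of undefined] by (simp add: abs_le_iff)
qed

definition mix_valuation :: "'a::boolean_algebra \<Rightarrow> (nat \<Rightarrow> 'a) \<Rightarrow> (nat \<Rightarrow> 'a) \<Rightarrow> nat \<Rightarrow> 'a" where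
  "mix_valuation c \<rho> \<sigma> = (\<lambda>i. mix c (\<rho> i) (\<sigma> i))"

lemma mix_valuation_swap:
  "mix_valuation c (mix_valuation c \<rho> \<sigma>) (mix_valuation c \<sigma> \<rho>) = \<rho>"
  unfolding mix_valuation_def by (simp add: mix_mix_swap)

lemma mix_valuation_upd:
  "(mix_valuation c \<rho> \<sigma>)(x := mix c a b) = mix_valuation c (\<rho>(x := a)) (\<sigma>(x := b))"
  unfolding mix_valuation_def by auto

lemma mix_valuation_const: "mix_valuation c (\<lambda>_. u) (\<lambda>_. v) = (\<lambda>_. mix c u v)"
  unfolding mix_valuation_def by simp

lemma teval_mix_valuation: "teval (mix_valuation c \<rho> \<sigma>) t = mix c (teval \<rho> t) (teval \<sigma> t)"
  by (induction t) (simp_all add: mix_valuation_def mix_same inf_mix sup_mix compl_mix)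

definition mix_additive :: "((nat \<Rightarrow> 'a::boolean_algebra) \<Rightarrow> real) \<Rightarrow> bool" where
  "mix_additive F \<longleftrightarrow>
     (\<forall>c \<rho> \<sigma>. F (mix_valuation c \<rho> \<sigma>) + F (mix_valuation c \<sigma> \<rho>) = F \<rho> + F \<sigma>)"

lemma mix_additiveD:
  "mix_additive F \<Longrightarrow> F (mix_valuation c \<rho> \<sigma>) + F (mix_valuation c \<sigma> \<rho>) = F \<rho> + F \<sigma>"
  unfolding mix_additive_def by blast

text \<open>Mixing twice restores the original pair of valuations, so one inequality suffices.\<close>

lemma mix_additiveI:
  assumes le: "\<And>c \<rho> \<sigma>. F (mix_valuation c \<rho> \<sigma>) + F (mix_valuation c \<sigma> \<rho>) \<le> F \<rho> + F \<sigma>"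
  shows "mix_additive F"
  unfolding mix_additive_def
proof (intro allI antisym)
  fix c \<rho> \<sigma>
  show "F (mix_valuation c \<rho> \<sigma>) + F (mix_valuation c \<sigma> \<rho>) \<le> F \<rho> + F \<sigma>"
    by (rule le)
  show "F \<rho> + F \<sigma> \<le> F (mix_valuation c \<rho> \<sigma>) + F (mix_valuation c \<sigma> \<rho>)"
    using le[of c "mix_valuation c \<rho> \<sigma>" "mix_valuation c \<sigma> \<rho>"] by (simp add: mix_valuation_swap)
qed

lemma mix_additive_uminus: "mix_additive F \<Longrightarrow> mix_additive (\<lambda>\<rho>. - F \<rho>)"
  unfolding mix_additive_def by (metis minus_add_distrib)

lemma mix_additive_INF:
  fixes F :: "(nat \<Rightarrow> 'a::boolean_algebra) \<Rightarrow> real"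
  assumes F: "mix_additive F" and bound: "\<And>\<rho>. \<bar>F \<rho>\<bar> \<le> B"
  shows "mix_additive (\<lambda>\<rho>. INF a. F (\<rho>(x := a)))"
proof (rule mix_additiveI)
  define G where "G \<tau> = (INF a. F (\<tau>(x := a)))" for \<tau>
  fix c \<rho> \<sigma>
  let ?m = "G (mix_valuation c \<rho> \<sigma>) + G (mix_valuation c \<sigma> \<rho>)"
  have "- B \<le> F \<tau>" for \<tau>
    using bound[of \<tau>] by (simp add: abs_le_iff)
  then have G_le: "G \<tau> \<le> F (\<tau>(x := a))" for \<tau> a
    unfolding G_def by (intro cINF_lower bdd_belowI[where m = "- B"]) auto
  have "?m \<le> F (\<rho>(x := a)) + F (\<sigma>(x := b))" for a b
    using G_le[of "mix_valuation c \<rho> \<sigma>" "mix c a b"] G_le[of "mix_valuation c \<sigma> \<rho>" "mix c b a"]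
      mix_additiveD[OF F, of c "\<rho>(x := a)" "\<sigma>(x := b)"]
    by (simp add: mix_valuation_upd)
  then have "?m - F (\<sigma>(x := b)) \<le> G \<rho>" for b
    unfolding G_def[of \<rho>] by (intro cINF_greatest) (auto simp: algebra_simps)
  then have "?m - G \<rho> \<le> G \<sigma>"
    unfolding G_def[of \<sigma>] by (intro cINF_greatest) (auto simp: algebra_simps)
  then show "?m \<le> G \<rho> + G \<sigma>"
    by simp
qed

lemma mix_additive_SUP:
  fixes F :: "(nat \<Rightarrow> 'a::boolean_algebra) \<Rightarrow> real"
  assumes F: "mix_additive F" and bound: "\<And>\<rho>. \<bar>F \<rho>\<bar> \<le> B"
  shows "mix_additive (\<lambda>\<rho>. SUP a. F (\<rho>(x := a)))"
proof -
  have "F \<tau> \<le> B" for \<tau>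
    using bound[of \<tau>] by (simp add: abs_le_iff)
  then have "- (SUP a. F (\<rho>(x := a))) = (INF a. - F (\<rho>(x := a)))" for \<rho>
    by (intro uminus_cSUP bdd_aboveI[where M = B]) auto
  then have "(SUP a. F (\<rho>(x := a))) = - (INF a. - F (\<rho>(x := a)))" for \<rho>
    by (metis minus_minus)
  moreover have "mix_additive (\<lambda>\<rho>. - (INF a. - F (\<rho>(x := a))))"
    using bound by (intro mix_additive_uminus mix_additive_INF[where B = B] F) auto
  ultimately show ?thesis
    by simp
qed

lemma feval_bounded: "\<exists>B. \<forall>\<rho>. \<bar>feval \<mu> \<rho> \<phi>\<bar> \<le> B"
  if "prA_model \<mu>"
proof (induction \<phi>)
  case AOne
  then show ?case by auto
next
  case (AMu t)
  have "\<bar>feval \<mu> \<rho> (AMu t)\<bar> \<le> 1" for \<rho>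
    using mu_nonneg[OF that] mu_le_1[OF that] by (simp add: abs_le_iff)
  then show ?case by blast
next
  case (ADist s t)
  have "\<bar>feval \<mu> \<rho> (ADist s t)\<bar> \<le> 1" for \<rho>
    using mu_nonneg[OF that] mu_le_1[OF that] by (simp add: abs_le_iff pra_dist_def)
  then show ?case by blast
next
  case (AScale r \<phi>)
  then obtain B where "\<And>\<rho>. \<bar>feval \<mu> \<rho> \<phi>\<bar> \<le> B" by blast
  then have "\<bar>feval \<mu> \<rho> (AScale r \<phi>)\<bar> \<le> \<bar>r\<bar> * B" for \<rho>
    by (simp add: abs_mult mult_left_mono)
  then show ?case by blast
next
  case (APlus \<phi> \<psi>)
  then obtain B1 B2 where "\<And>\<rho>. \<bar>feval \<mu> \<rho> \<phi>\<bar> \<le> B1" and "\<And>\<rho>. \<bar>feval \<mu> \<rho> \<psi>\<bar> \<le> B2"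
    by blast
  then have "\<bar>feval \<mu> \<rho> (APlus \<phi> \<psi>)\<bar> \<le> B1 + B2" for \<rho>
    by (smt (verit) feval.simps(5))
  then show ?case by blast
next
  case (AInf x \<phi>)
  then show ?case by (auto intro: abs_INF_le)
next
  case (ASup x \<phi>)
  then show ?case by (auto intro: abs_SUP_le)
qed

lemma feval_mix_additive: "mix_additive (\<lambda>\<rho>. feval \<mu> \<rho> \<phi>)"
  if M: "prA_model \<mu>"
proof (induction \<phi>)
  case AOne
  then show ?case
    unfolding mix_additive_def by simp
next
  case (AMu t)
  then show ?case
    unfolding mix_additive_def by (simp only: feval.simps teval_mix_valuation mu_mix[OF M] simp_thms)
next
  case (ADist s t)
  then show ?case
    unfolding mix_additive_def
    by (simp only: feval.simps teval_mix_valuation pra_dist_def sdiff_mix mu_mix[OF M] simp_thms)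
next
  case (AScale r \<phi>)
  then show ?case
    unfolding mix_additive_def by (metis feval.simps(4) distrib_left)
next
  case (APlus \<phi> \<psi>)
  then show ?case
    unfolding mix_additive_def by (simp add: algebra_simps)
next
  case (AInf x \<phi>)
  then show ?case
    using feval_bounded[OF M, of \<phi>] by (auto intro: mix_additive_INF)
next
  case (ASup x \<phi>)
  then show ?case
    using feval_bounded[OF M, of \<phi>] by (auto intro: mix_additive_SUP)
qed

lemma definable_pred_mix:
  assumes M: "prA_model \<mu>" and "definable_pred \<mu> P"
  shows "P (mix c x y) + P (mix c y x) = P x + P y"
proof -
  obtain \<phi>s where "uniform_limit UNIV (\<lambda>n a. feval \<mu> (\<lambda>_. a) (\<phi>s n)) P sequentially"
    using assms(2) unfolding definable_pred_def by blast
  then have lim: "(\<lambda>n. feval \<mu> (\<lambda>_. a) (\<phi>s n)) \<longlonglongrightarrow> P a" for a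
    by (rule tendsto_uniform_limitI) simp
  have "feval \<mu> (\<lambda>_. mix c x y) (\<phi>s n) + feval \<mu> (\<lambda>_. mix c y x) (\<phi>s n)
      = feval \<mu> (\<lambda>_. x) (\<phi>s n) + feval \<mu> (\<lambda>_. y) (\<phi>s n)" for n
    using mix_additiveD[OF feval_mix_additive[OF M, of "\<phi>s n"], of c "\<lambda>_. x" "\<lambda>_. y"]
    by (simp add: mix_valuation_const)
  then have "(\<lambda>n. feval \<mu> (\<lambda>_. mix c x y) (\<phi>s n) + feval \<mu> (\<lambda>_. mix c y x) (\<phi>s n))
      \<longlonglongrightarrow> P x + P y"
    by (simp add: tendsto_add lim)
  moreover have "(\<lambda>n. feval \<mu> (\<lambda>_. mix c x y) (\<phi>s n) + feval \<mu> (\<lambda>_. mix c y x) (\<phi>s n))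
      \<longlonglongrightarrow> P (mix c x y) + P (mix c y x)"
    by (intro tendsto_add lim)
  ultimately show ?thesis
    by (rule LIMSEQ_unique[rotated])
qed

context
  fixes \<mu> :: "'a::boolean_algebra \<Rightarrow> real"
  assumes M: "prA_model \<mu>"
begin

lemma dist_to_set_nonneg: "D \<noteq> {} \<Longrightarrow> 0 \<le> dist_to_set \<mu> D x"
  unfolding dist_to_set_def by (rule cINF_greatest) (simp_all add: pra_dist_nonneg[OF M])

lemma dist_to_set_eq_0_iff:
  assumes "D \<noteq> {}" and "closed_set \<mu> D"
  shows "dist_to_set \<mu> D x = 0 \<longleftrightarrow> x \<in> D"
proof
  have bdd: "bdd_below ((\<lambda>a. pra_dist \<mu> x a) ` D)"
    by (rule bdd_belowI[where m = 0]) (auto simp: pra_dist_nonneg[OF M])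
  show "x \<in> D" if "dist_to_set \<mu> D x = 0"
  proof -
    have "\<exists>a\<in>D. pra_dist \<mu> x a < e" if "0 < e" for e
      using \<open>dist_to_set \<mu> D x = 0\<close> \<open>0 < e\<close> cINF_less_iff[OF assms(1) bdd]
      unfolding dist_to_set_def by simp
    then show ?thesis
      using assms(2) unfolding closed_set_def by blast
  qed
  show "dist_to_set \<mu> D x = 0" if "x \<in> D"
  proof -
    have "dist_to_set \<mu> D x \<le> pra_dist \<mu> x x"
      unfolding dist_to_set_def using that by (rule cINF_lower[OF bdd])
    then show ?thesis
      using dist_to_set_nonneg[OF assms(1), of x] by (simp add: pra_dist_self[OF M])
  qed
qed

lemma closed_set_limit:
  assumes "closed_set \<mu> D" and "\<And>n. y n \<in> D" and "(\<lambda>n. pra_dist \<mu> (y n) a) \<longlonglongrightarrow> 0"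
  shows "a \<in> D"
proof -
  have "\<exists>z\<in>D. pra_dist \<mu> a z < e" if e: "0 < e" for e
  proof -
    obtain n where "pra_dist \<mu> (y n) a < e"
      using order_tendstoD(2)[OF assms(3) e] unfolding eventually_sequentially by blast
    then show ?thesis
      using assms(2)[of n] by (auto simp: pra_dist_commute[OF M])
  qed
  then show ?thesis
    using assms(1) unfolding closed_set_def by blast
qed

lemma tendsto_mu:
  assumes "(\<lambda>n. pra_dist \<mu> (y n) a) \<longlonglongrightarrow> 0"
  shows "(\<lambda>n. \<mu> (y n)) \<longlonglongrightarrow> \<mu> a"
proof -
  have "norm (\<mu> (y n) - \<mu> a) \<le> pra_dist \<mu> (y n) a" for n
    using abs_mu_diff_le_pra_dist[OF M] by simp
  then have "(\<lambda>n. \<mu> (y n) - \<mu> a) \<longlonglongrightarrow> 0"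
    by (intro Lim_null_comparison[OF always_eventually assms]) blast
  then show ?thesis
    by (rule LIM_zero_cancel)
qed

text \<open>An antitone sequence is Cauchy because its measures form a bounded monotone real sequence;
  completeness of the metric then provides a limit.\<close>

lemma decseq_pra_converges:
  assumes "decseq y"
  obtains a where "(\<lambda>n. pra_dist \<mu> (y n) a) \<longlonglongrightarrow> 0"
proof -
  have dist_eq: "pra_dist \<mu> (y m) (y n) = \<bar>\<mu> (y m) - \<mu> (y n)\<bar>" for m n
  proof (cases "m \<le> n")
    case True
    then have le: "y n \<le> y m"
      using assms by (simp add: decseq_def)
    show ?thesis
      using mu_mono[OF M le] pra_dist_le_eq[OF M le] by simp
  next
    case False
    then have le: "y m \<le> y n"
      using assms by (simp add: decseq_def)
    show ?thesis
      using mu_mono[OF M le] pra_dist_le_eq[OF M le] pra_dist_commute[OF M, of "y m"] by simp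
  qed
  have "decseq (\<lambda>n. \<mu> (y n))"
    using assms mu_mono[OF M] by (simp add: decseq_def)
  then obtain L where "(\<lambda>n. \<mu> (y n)) \<longlonglongrightarrow> L"
    using decseq_convergent[of _ 0] mu_nonneg[OF M] by blast
  then have "Cauchy (\<lambda>n. \<mu> (y n))"
    by (rule LIMSEQ_imp_Cauchy)
  then have "\<forall>e>0. \<exists>N. \<forall>m\<ge>N. \<forall>n\<ge>N. pra_dist \<mu> (y m) (y n) < e"
    unfolding Cauchy_iff dist_eq by simp
  then show ?thesis
    using pra_complete[OF M] that by blast
qed

lemma inf_closed_attains_min_measure:
  assumes "D \<noteq> {}" and "closed_set \<mu> D" and inf_closed: "\<And>x y. x \<in> D \<Longrightarrow> y \<in> D \<Longrightarrow> inf x y \<in> D"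
  obtains a where "a \<in> D" and "\<And>z. z \<in> D \<Longrightarrow> \<mu> a \<le> \<mu> z"
proof -
  define m where "m = Inf (\<mu> ` D)"
  have bdd: "bdd_below (\<mu> ` D)"
    by (rule bdd_belowI[where m = 0]) (auto simp: mu_nonneg[OF M])
  have m_le: "m \<le> \<mu> z" if "z \<in> D" for z
    unfolding m_def using bdd that by (simp add: cInf_lower)
  have "\<exists>x\<in>D. \<mu> x < m + inverse (real (Suc n))" for n
    using cInf_less_iff[OF _ bdd, of "m + inverse (real (Suc n))"] assms(1) unfolding m_def by auto
  then obtain x where xD: "\<And>n. x n \<in> D" and x_small: "\<And>n. \<mu> (x n) < m + inverse (real (Suc n))"
    by metis
  define y where "y = rec_nat (x 0) (\<lambda>n yn. inf yn (x (Suc n)))"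
  have y_0: "y 0 = x 0" and y_Suc: "y (Suc n) = inf (y n) (x (Suc n))" for n
    unfolding y_def by simp_all
  have yD: "y n \<in> D" for n
    by (induction n) (simp_all add: y_0 y_Suc xD inf_closed)
  have "decseq y"
    by (rule decseq_SucI) (simp add: y_Suc)
  then obtain a where lim: "(\<lambda>n. pra_dist \<mu> (y n) a) \<longlonglongrightarrow> 0"
    by (rule decseq_pra_converges)
  have y_le_x: "y n \<le> x n" for n
    by (cases n) (simp_all add: y_0 y_Suc)
  have lower: "\<forall>n. m \<le> \<mu> (y n)"
    using m_le[OF yD] by blast
  have upper: "\<forall>n. \<mu> (y n) \<le> m + inverse (real (Suc n))"
    using mu_mono[OF M y_le_x] x_small by (meson less_imp_le order_trans)
  have "(\<lambda>n. m + inverse (real (Suc n))) \<longlonglongrightarrow> m"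
    using tendsto_add[OF tendsto_const LIMSEQ_inverse_real_of_nat, of m] by simp
  then have "(\<lambda>n. \<mu> (y n)) \<longlonglongrightarrow> m"
    using tendsto_sandwich[OF always_eventually[OF lower] always_eventually[OF upper] tendsto_const]
    by blast
  then have "\<mu> a = m"
    using tendsto_mu[OF lim] LIMSEQ_unique by blast
  then show ?thesis
    using that closed_set_limit[OF assms(2) yD lim] m_le by blast
qed

lemma inf_closed_least:
  assumes "D \<noteq> {}" and "closed_set \<mu> D" and inf_closed: "\<And>x y. x \<in> D \<Longrightarrow> y \<in> D \<Longrightarrow> inf x y \<in> D"
  obtains a where "a \<in> D" and "\<And>z. z \<in> D \<Longrightarrow> a \<le> z"
proof -
  obtain a where aD: "a \<in> D" and a_min: "\<And>z. z \<in> D \<Longrightarrow> \<mu> a \<le> \<mu> z"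
    using inf_closed_attains_min_measure[OF assms] by blast
  have "a \<le> z" if "z \<in> D" for z
  proof -
    have "pra_dist \<mu> a (inf a z) = \<mu> a - \<mu> (inf a z)"
      by (rule pra_dist_le_eq[OF M]) simp
    then have "pra_dist \<mu> a (inf a z) = 0"
      using a_min[OF inf_closed[OF aD that]] pra_dist_nonneg[OF M, of a "inf a z"] by simp
    then have "a = inf a z"
      by (rule pra_dist_eq_0D[OF M])
    then show ?thesis
      by (metis inf.absorb_iff1)
  qed
  then show ?thesis
    using that aD by blast
qed

lemma sup_closed_greatest:
  assumes "D \<noteq> {}" and "closed_set \<mu> D" and sup_closed: "\<And>x y. x \<in> D \<Longrightarrow> y \<in> D \<Longrightarrow> sup x y \<in> D"
  obtains b where "b \<in> D" and "\<And>z. z \<in> D \<Longrightarrow> z \<le> b"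
proof -
  have "closed_set \<mu> (uminus ` D)"
    using assms(2) unfolding closed_set_def
    by (metis (no_types, lifting) double_compl image_iff pra_dist_compl[OF M])
  moreover have "inf x y \<in> uminus ` D" if "x \<in> uminus ` D" and "y \<in> uminus ` D" for x y
    using that sup_closed by (auto intro!: image_eqI[where x = "sup (- x) (- y)"])
  ultimately obtain a where "a \<in> uminus ` D" and "\<And>z. z \<in> uminus ` D \<Longrightarrow> a \<le> z"
    using inf_closed_least[of "uminus ` D"] assms(1) by blast
  then show ?thesis
    using that by (metis compl_le_compl_iff image_eqI imageE)
qed

lemma dist_to_set_interval:
  assumes "a \<le> b"
  shows "dist_to_set \<mu> {y. a \<le> y \<and> y \<le> b} x = \<mu> (inf a (- x)) + \<mu> (inf x (- b))"
proof -
  define T where "T = sup (inf x (- b)) (inf (- x) a)"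
  have "inf (inf x (- b)) (inf (- x) a) = bot"
    by (simp add: inf_aci)
  then have \<mu>_T: "\<mu> T = \<mu> (inf a (- x)) + \<mu> (inf x (- b))"
    unfolding T_def using mu_modular[OF M, of "inf x (- b)" "inf (- x) a"] mu_bot[OF M]
    by (simp add: inf_commute)
  have T_le: "\<mu> T \<le> pra_dist \<mu> x y" if "a \<le> y" and "y \<le> b" for y
    unfolding pra_dist_def T_def sdiff_def using that
    by (intro mu_mono[OF M] sup_mono inf_mono) simp_all
  text \<open>The nearest point of the interval is the truncation of x.\<close>
  define y\<^sub>0 where "y\<^sub>0 = inf (sup x a) b"
  have "sdiff x y\<^sub>0 = T"
    unfolding sdiff_def T_def y\<^sub>0_def using assms
    by (simp add: inf_sup_distrib1 inf_assoc[symmetric] inf_commute[of "- x" a]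
        inf_absorb1[OF le_infI1[OF assms]])
  moreover have "a \<le> y\<^sub>0" and "y\<^sub>0 \<le> b"
    unfolding y\<^sub>0_def using assms by auto
  ultimately have "(INF y\<in>{y. a \<le> y \<and> y \<le> b}. pra_dist \<mu> x y) = \<mu> T"
    using T_le pra_dist_nonneg[OF M]
    by (intro antisym cINF_lower2[where x = y\<^sub>0] cINF_greatest bdd_belowI[where m = 0])
      (auto simp: pra_dist_def)
  then show ?thesis
    unfolding dist_to_set_def \<mu>_T .
qed

lemma definable_set_mix_closed:
  assumes "D \<noteq> {}" and "closed_set \<mu> D" and "definable_set \<mu> D" and "x \<in> D" and "y \<in> D"
  shows "mix c x y \<in> D"
proof -
  let ?P = "dist_to_set \<mu> D"
  have "?P (mix c x y) + ?P (mix c y x) = ?P x + ?P y"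
    using definable_pred_mix[OF M] assms(3) unfolding definable_set_def by blast
  also have "\<dots> = 0"
    using dist_to_set_eq_0_iff[OF assms(1,2)] assms(4,5) by (metis add.right_neutral)
  finally show ?thesis
    using dist_to_set_nonneg[OF assms(1)] dist_to_set_eq_0_iff[OF assms(1,2)]
    by (smt (verit))
qed

end

lemma definable_pred_formula:
  "ffv \<phi> \<subseteq> {0} \<Longrightarrow> definable_pred \<mu> (\<lambda>x. feval \<mu> (\<lambda>_. x) \<phi>)"
  unfolding definable_pred_def by (intro exI[of _ "\<lambda>n. \<phi>"]) (simp add: uniform_limit_const)

theorem mainTheorem6:
  fixes \<mu> :: "'a::boolean_algebra \<Rightarrow> real" and D :: "'a set"
  assumes "prA_model \<mu>"
    and "D \<noteq> {}"
    and "closed_set \<mu> D"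
  shows "definable_set \<mu> D \<longleftrightarrow> (\<exists>a b. a \<le> b \<and> D = {x. a \<le> x \<and> x \<le> b})"
proof
  assume "definable_set \<mu> D"
  then have mix_closed: "mix c x y \<in> D" if "x \<in> D" and "y \<in> D" for c x y
    using definable_set_mix_closed assms that by blast
  have inf_closed: "inf x y \<in> D" if "x \<in> D" and "y \<in> D" for x y
    using mix_closed[OF that, of y] by (simp add: mix_self_right)
  have sup_closed: "sup x y \<in> D" if "x \<in> D" and "y \<in> D" for x y
    using mix_closed[OF that, of x] by (simp add: mix_self_left)
  obtain a where aD: "a \<in> D" and least: "\<And>z. z \<in> D \<Longrightarrow> a \<le> z"
    using inf_closed_least[OF assms inf_closed] by blast
  obtain b where bD: "b \<in> D" and greatest: "\<And>z. z \<in> D \<Longrightarrow> z \<le> b"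
    using sup_closed_greatest[OF assms sup_closed] by blast
  have "x \<in> D" if "a \<le> x" and "x \<le> b" for x
    using mix_closed[OF bD aD, of x] mix_between[OF that] by simp
  then have "D = {x. a \<le> x \<and> x \<le> b}"
    using least greatest by blast
  then show "\<exists>a b. a \<le> b \<and> D = {x. a \<le> x \<and> x \<le> b}"
    using least bD by blast
next
  assume "\<exists>a b. a \<le> b \<and> D = {x. a \<le> x \<and> x \<le> b}"
  then obtain a b where "a \<le> b" and D: "D = {x. a \<le> x \<and> x \<le> b}"
    by blast
  define \<phi> where "\<phi> = APlus (AMu (TMeet (TPar a) (TCompl (TVar 0)))) (AMu (TMeet (TVar 0) (TCompl (TPar b))))"
  have "dist_to_set \<mu> D = (\<lambda>x. feval \<mu> (\<lambda>_. x) \<phi>)"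
    unfolding D \<phi>_def by (rule ext) (simp add: dist_to_set_interval[OF assms(1) \<open>a \<le> b\<close>])
  moreover have "ffv \<phi> \<subseteq> {0}"
    unfolding \<phi>_def by simp
  ultimately show "definable_set \<mu> D"
    unfolding definable_set_def by (simp add: definable_pred_formula)
qed

end
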